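(* Let $n\geq 1$ and let $\phi$ be a variable-free formula with modalities among $[0],\dots,[n]$. Let $\overline{\phi}$ be the formula obtained from $\phi$ by replacing every subformula of the form $[n]\psi$ by $\top$. If $\mathbf{GLP}\nvdash\langle n\rangle\top\to\neg[0]\phi$, then $\mathbf{GLP}\nvdash\langle n\rangle\top\to\neg[0]\overline{\phi}$.
   Context: $\mathbf{GLP}$ is the propositional polymodal logic with modalities $[0],[1],\dots$ ($\langle k\rangle:=\neg[k]\neg$) axiomatized by classical tautologies; $[k](\phi\to\psi)\to([k]\phi\to[k]\psi)$; $[k]([k]\phi\to\phi)\to[k]\phi$; $\langle j\rangle\phi\to[k]\langle j\rangle\phi$ for $j<k$; $[j]\phi\to[k]\phi$ for $j\leq k$; rules modus ponens and necessitation. Variable-free formulas are built from $\top,\bot$ by boolean connectives and modalities. *)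

theory Defs
  imports Main
begin

datatype fm = Var nat | Bot | Imp fm fm | Box nat fm

definition Neg :: "fm \<Rightarrow> fm" where "Neg p = Imp p Bot"
definition Top :: fm where "Top = Imp Bot Bot"
definition Dia :: "nat \<Rightarrow> fm \<Rightarrow> fm" where "Dia k p = Neg (Box k (Neg p))"

text \<open>Classical propositional evaluation, treating variables and boxed
  formulas as atoms; a tautology is a formula true under every such valuation
  (i.e. a substitution instance of a propositional tautology).\<close>

fun peval :: "(fm \<Rightarrow> bool) \<Rightarrow> fm \<Rightarrow> bool" where
  "peval v (Var i) = v (Var i)"
| "peval v Bot = False"
| "peval v (Imp p q) = (peval v p \<longrightarrow> peval v q)"
| "peval v (Box k p) = v (Box k p)"

definition taut :: "fm \<Rightarrow> bool" where "taut p = (\<forall>v. peval v p)"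

inductive GLP :: "fm \<Rightarrow> bool" where
  ax_taut: "taut p \<Longrightarrow> GLP p"
| ax_K: "GLP (Imp (Box k (Imp p q)) (Imp (Box k p) (Box k q)))"
| ax_Loeb: "GLP (Imp (Box k (Imp (Box k p) p)) (Box k p))"
| ax_dia: "j < k \<Longrightarrow> GLP (Imp (Dia j p) (Box k (Dia j p)))"
| ax_mono: "j \<le> k \<Longrightarrow> GLP (Imp (Box j p) (Box k p))"
| mp: "GLP (Imp p q) \<Longrightarrow> GLP p \<Longrightarrow> GLP q"
| nec: "GLP p \<Longrightarrow> GLP (Box k p)"

fun var_free :: "fm \<Rightarrow> bool" where
  "var_free (Var i) = False"
| "var_free Bot = True"
| "var_free (Imp p q) = (var_free p \<and> var_free q)"
| "var_free (Box k p) = var_free p"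

fun mods :: "fm \<Rightarrow> nat set" where
  "mods (Var i) = {}"
| "mods Bot = {}"
| "mods (Imp p q) = mods p \<union> mods q"
| "mods (Box k p) = insert k (mods p)"

fun bar :: "nat \<Rightarrow> fm \<Rightarrow> fm" where
  "bar n (Var i) = Var i"
| "bar n Bot = Bot"
| "bar n (Imp p q) = Imp (bar n p) (bar n q)"
| "bar n (Box k p) = (if k = n then Top else Box k (bar n p))"

end

theory Submission
  imports Defs
begin

text \<open>Let N be [n]\<bottom> and H be N \<and> [0]N. Under H every formula [n]\<psi> is true, and H is
  preserved by every [k], so by induction on \<phi> the formulas \<phi> and its bar version
  are equivalent under H. Hence [0]\<phi> together with [0]N yields [0] of the bar version,
  and thus N if the latter implies N. Loeb's axiom for [0] removes the extra premise
  [0]N, so [0]\<phi> \<rightarrow> N, i.e. \<langle>n\<rangle>\<top> \<rightarrow> \<not>[0]\<phi>, is provable as well.\<close>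

definition Conj :: "fm \<Rightarrow> fm \<Rightarrow> fm" where "Conj p q = Neg (Imp p (Neg q))"

definition BoxBot :: "nat \<Rightarrow> fm" where "BoxBot n = Box n (Neg Top)"

definition BoxBot_hered :: "nat \<Rightarrow> fm" where
  "BoxBot_hered n = Conj (BoxBot n) (Box 0 (BoxBot n))"

lemma peval_Neg [simp]: "peval v (Neg p) = (\<not> peval v p)"
  by (simp add: Neg_def)

lemma peval_Top [simp]: "peval v Top"
  by (simp add: Top_def)

lemma peval_Conj [simp]: "peval v (Conj p q) = (peval v p \<and> peval v q)"
  by (simp add: Conj_def)

lemma GLP_tautI: "(\<And>v. peval v p) \<Longrightarrow> GLP p"
  by (simp add: taut_def ax_taut)

lemma GLP_prop_consequence1:
  "GLP a \<Longrightarrow> (\<And>v. peval v a \<Longrightarrow> peval v c) \<Longrightarrow> GLP c"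
  by (metis GLP.mp GLP_tautI peval.simps(3))

lemma GLP_prop_consequence2:
  assumes "GLP a" and "GLP b" and "\<And>v. peval v a \<Longrightarrow> peval v b \<Longrightarrow> peval v c"
  shows "GLP c"
proof -
  have "GLP (Imp b c)" using assms(1) by (rule GLP_prop_consequence1) (use assms(3) in auto)
  then show ?thesis using assms(2) by (rule GLP.mp)
qed

lemma GLP_prop_consequence3:
  assumes "GLP a" and "GLP b" and "GLP d"
    and "\<And>v. peval v a \<Longrightarrow> peval v b \<Longrightarrow> peval v d \<Longrightarrow> peval v c"
  shows "GLP c"
proof -
  have "GLP (Imp d c)" using assms(1,2) by (rule GLP_prop_consequence2) (use assms(4) in auto)
  then show ?thesis using assms(3) by (rule GLP.mp)
qed

lemma GLP_box_mono: "GLP (Imp p q) \<Longrightarrow> GLP (Imp (Box k p) (Box k q))"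
  by (rule GLP.mp[OF ax_K nec])

lemma GLP_box_mono2:
  assumes "GLP (Imp p (Imp q r))"
  shows "GLP (Imp (Box k p) (Imp (Box k q) (Box k r)))"
  using GLP_box_mono[OF assms] ax_K by (rule GLP_prop_consequence2) auto

lemma GLP_box_Conj: "GLP (Imp (Box k p) (Imp (Box k q) (Box k (Conj p q))))"
  by (rule GLP_box_mono2, rule GLP_tautI) simp

text \<open>The usual derivation of axiom 4 from Loeb's axiom, applied to p \<and> [k]p.\<close>

lemma GLP_box_trans: "GLP (Imp (Box k p) (Box k (Box k p)))"
proof -
  define q where "q = Conj p (Box k p)"
  have box_q: "GLP (Imp (Box k q) (Box k p))" "GLP (Imp (Box k q) (Box k (Box k p)))"
    by (rule GLP_box_mono, rule GLP_tautI, simp add: q_def)+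
  have "GLP (Imp p (Imp (Box k q) q))"
    using box_q(1) by (rule GLP_prop_consequence1) (simp add: q_def)
  then have "GLP (Imp (Box k p) (Box k (Imp (Box k q) q)))" by (rule GLP_box_mono)
  then show ?thesis using ax_Loeb box_q(2) by (rule GLP_prop_consequence3) auto
qed

lemma GLP_Loeb_rule_under_box:
  assumes "GLP (Imp (Box k p) (Imp (Box k q) q))"
  shows "GLP (Imp (Box k p) q)"
proof -
  have "GLP (Imp (Box k (Box k p)) (Box k (Imp (Box k q) q)))"
    using assms by (rule GLP_box_mono)
  then have "GLP (Imp (Box k p) (Box k q))"
    using ax_Loeb GLP_box_trans by (rule GLP_prop_consequence3) auto
  then show ?thesis using assms by (rule GLP_prop_consequence2) auto
qed

lemma GLP_box0_imp_box_hered: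
  "GLP (Imp (Box 0 p) (Box k (Conj p (Box 0 p))))"
proof -
  have mono: "GLP (Imp (Box 0 p) (Box k p))" "GLP (Imp (Box 0 (Box 0 p)) (Box k (Box 0 p)))"
    by (rule ax_mono, simp)+
  have "GLP (Imp (Box 0 p) (Box k (Box 0 p)))"
    using GLP_box_trans[of 0 p] mono(2) by (rule GLP_prop_consequence2) auto
  then show ?thesis
    using mono(1) GLP_box_Conj[of k p "Box 0 p"] by (rule GLP_prop_consequence3) auto
qed

lemma GLP_BoxBot_hered_imp_box: "GLP (Imp (BoxBot_hered n) (Box k (BoxBot_hered n)))"
  using GLP_box0_imp_box_hered[of "BoxBot n" k] unfolding BoxBot_hered_def
  by (rule GLP_prop_consequence1) simp

lemma GLP_BoxBot_imp_Box: "GLP (Imp (BoxBot n) (Box n p))"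
  unfolding BoxBot_def by (rule GLP_box_mono, rule GLP_tautI) simp

lemma GLP_bar_equiv:
  assumes "mods \<phi> \<subseteq> {..n}"
  shows "GLP (Imp (BoxBot_hered n) (Imp \<phi> (bar n \<phi>)))
    \<and> GLP (Imp (BoxBot_hered n) (Imp (bar n \<phi>) \<phi>))"
  using assms
proof (induction \<phi>)
  case (Imp p q)
  then have "GLP (Imp (BoxBot_hered n) (Imp p (bar n p)))"
    "GLP (Imp (BoxBot_hered n) (Imp (bar n p) p))"
    "GLP (Imp (BoxBot_hered n) (Imp q (bar n q)))"
    "GLP (Imp (BoxBot_hered n) (Imp (bar n q) q))" by auto
  then show ?case by (auto elim: GLP_prop_consequence2)
next
  case (Box k p)
  show ?case
  proof (cases "k = n")
    case True
    have "GLP (Imp (BoxBot_hered n) (Imp Top (Box n p)))"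
      using GLP_BoxBot_imp_Box[of n p] by (rule GLP_prop_consequence1) (simp add: BoxBot_hered_def)
    then show ?thesis using True by (auto intro: GLP_tautI)
  next
    case False
    with Box.prems have "mods p \<subseteq> {..n}" by auto
    with Box.IH have "GLP (Imp (Box k (BoxBot_hered n)) (Imp (Box k p) (Box k (bar n p))))"
      "GLP (Imp (Box k (BoxBot_hered n)) (Imp (Box k (bar n p)) (Box k p)))"
      by (auto intro: GLP_box_mono2)
    with GLP_BoxBot_hered_imp_box[of n k] False show ?thesis
      by (auto elim: GLP_prop_consequence2)
  qed
qed (auto intro: GLP_tautI)

lemma GLP_box0_imp_box0_bar:
  assumes "mods \<phi> \<subseteq> {..n}"
  shows "GLP (Imp (Box 0 (BoxBot n)) (Imp (Box 0 \<phi>) (Box 0 (bar n \<phi>))))"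
proof -
  have "GLP (Imp (Box 0 (BoxBot_hered n)) (Imp (Box 0 \<phi>) (Box 0 (bar n \<phi>))))"
    using GLP_bar_equiv[OF assms] by (auto intro: GLP_box_mono2)
  moreover have "GLP (Imp (Box 0 (BoxBot n)) (Box 0 (BoxBot_hered n)))"
    using GLP_box0_imp_box_hered[of "BoxBot n" 0] unfolding BoxBot_hered_def .
  ultimately show ?thesis by (rule GLP_prop_consequence2) auto
qed

lemma GLP_BoxBot_of_box0_bar:
  assumes "mods \<phi> \<subseteq> {..n}" and "GLP (Imp (Box 0 (bar n \<phi>)) (BoxBot n))"
  shows "GLP (Imp (Box 0 \<phi>) (BoxBot n))"
proof (rule GLP_Loeb_rule_under_box)
  show "GLP (Imp (Box 0 \<phi>) (Imp (Box 0 (BoxBot n)) (BoxBot n)))"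
    using GLP_box0_imp_box0_bar[OF assms(1)] assms(2) by (rule GLP_prop_consequence2) auto
qed

lemma GLP_Dia_Top_imp_Neg_iff:
  "GLP (Imp (Dia n Top) (Neg p)) \<longleftrightarrow> GLP (Imp p (BoxBot n))"
  by (auto elim: GLP_prop_consequence1 simp: Dia_def BoxBot_def)

theorem mainTheorem20:
  fixes n :: nat and \<phi> :: fm
  assumes "n \<ge> 1" and "var_free \<phi>" and "mods \<phi> \<subseteq> {..n}"
    and "\<not> GLP (Imp (Dia n Top) (Neg (Box 0 \<phi>)))"
  shows "\<not> GLP (Imp (Dia n Top) (Neg (Box 0 (bar n \<phi>))))"
  using assms(3,4) GLP_BoxBot_of_box0_bar by (auto simp: GLP_Dia_Top_imp_Neg_iff)

end
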